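(* Let $\phi$ be a Drinfeld $A[\underline{t}_s]$-module over $\mathbb{T}_s$ with $\phi_\theta=\theta+A_1\tau+\dots+A_r\tau^r$, $A_r\in\mathbb{T}_s^\times$, and suppose $\Psi\in\mathrm{GL}_r(\mathbb{T}_s\{z/\theta\})$ satisfies $\Psi^{(-1)}=\Phi\Psi$. Set \[ V_\phi=\{\mathbf{g}\in\mathrm{Mat}_{1\times r}(\mathbb{T}_s\{z/\theta\}) \mid \mathbf{g}^{(-1)}\Phi=\mathbf{g}\}. \] Then: (a) $V_\phi=\mathrm{Mat}_{1\times r}(\mathbb{F}_q[\underline{t}_s][z])\,\Psi^{-1}$; (b) $V_\phi$ is a free $\mathbb{F}_q[\underline{t}_s][z]$-module of rank $r$; (c) $V_\phi\cap\mathrm{Mat}_{1\times r}(\mathbb{T}_s[z])=\{0\}$.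
   Context: $\mathbb{F}_q$ finite field, $\theta,t_1,\dots,t_s,z$ independent variables, $A[\underline{t}_s]=\mathbb{F}_q[\theta,t_1,\dots,t_s]$, $\mathbb{F}_q[\underline{t}_s]=\mathbb{F}_q[t_1,\dots,t_s]$. $\mathbb{C}_\infty$: completion of an algebraic closure of $\mathbb{F}_q((1/\theta))$, $|\theta|_\infty=q$. $\mathbb{T}_s$: Tate algebra of power series in $t_1,\dots,t_s$ over $\mathbb{C}_\infty$ with coefficients tending to $0$, Gauss norm $\|\cdot\|_\infty$. $\tau$: automorphism raising $\mathbb{C}_\infty$-coefficients to the $q$-th power, $f^{(n)}=\tau^n(f)$ ($n\in\mathbb{Z}$), applied entrywise to matrices and coefficientwise to power series in $z$ (fixing $z$). $\mathbb{T}_s[\tau]$: twisted polynomial ring with $\tau f=f^{(1)}\tau$. A Drinfeld $A[\underline{t}_s]$-module is an $\mathbb{F}_q[\underline{t}_s]$-algebra homomorphism $\phi:A[\underline{t}_s]\to\mathbb{T}_s[\tau]$ with $\phi_\theta=\theta+A_1\tau+\dots+A_r\tau^r$. $\mathbb{T}_s\{z/\theta\}=\{\sum_{i\ge0}a_iz^i: a_i\in\mathbb{T}_s,\ q^i\|a_i\|_\infty\to0\}$. $\Phi\in\mathrm{Mat}_r(\mathbb{T}_s[z])$ has $i$-th row the $(i+1)$-st standard basis row vector for $1\le i\le r-1$ and last row $\big[(z-\theta)/A_r^{(-r)},-A_1^{(-1)}/A_r^{(-r)},\dots,-A_{r-1}^{(-r+1)}/A_r^{(-r)}\big]$. *)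

theory Defs
  imports "HOL-Computational_Algebra.Polynomial"
begin

definition in_Fq :: "nat \<Rightarrow> 'c::field \<Rightarrow> bool" where
  "in_Fq q c \<longleftrightarrow> c ^ q = c"

definition nonarch_abs :: "('c::field \<Rightarrow> real) \<Rightarrow> bool" where
  "nonarch_abs av \<longleftrightarrow>
     (\<forall>x. av x \<ge> 0) \<and> (\<forall>x. av x = 0 \<longleftrightarrow> x = 0) \<and>
     (\<forall>x y. av (x * y) = av x * av y) \<and>
     (\<forall>x y. av (x + y) \<le> max (av x) (av y))"

definition complete_abs :: "('c::field \<Rightarrow> real) \<Rightarrow> bool" where
  "complete_abs av \<longleftrightarrow>
     (\<forall>X::nat \<Rightarrow> 'c. (\<forall>e>0. \<exists>N. \<forall>m\<ge>N. \<forall>n\<ge>N. av (X m - X n) < e) \<longrightarrow>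
        (\<exists>L. \<forall>e>0. \<exists>N. \<forall>n\<ge>N. av (X n - L) < e))"

definition alg_closed_field :: "'c::field itself \<Rightarrow> bool" where
  "alg_closed_field _ \<longleftrightarrow> (\<forall>P :: 'c poly. degree P \<ge> 1 \<longrightarrow> (\<exists>x. poly P x = 0))"

definition alg_over_Fq_theta :: "nat \<Rightarrow> 'c::field \<Rightarrow> 'c \<Rightarrow> bool" where
  "alg_over_Fq_theta q \<theta> y \<longleftrightarrow>
     (\<exists>P :: 'c poly. P \<noteq> 0 \<and> poly P y = 0 \<and>
        (\<forall>i. \<exists>f :: 'c poly. (\<forall>j. in_Fq q (coeff f j)) \<and> coeff P i = poly f \<theta>))"

definition is_Cinf :: "nat \<Rightarrow> ('c::field \<Rightarrow> real) \<Rightarrow> 'c \<Rightarrow> bool" where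
  "is_Cinf q av \<theta> \<longleftrightarrow>
     (\<exists>p k. prime p \<and> k \<ge> 1 \<and> q = p ^ k \<and> of_nat p = (0::'c)) \<and>
     nonarch_abs av \<and> complete_abs av \<and> alg_closed_field TYPE('c) \<and>
     av \<theta> = real q \<and>
     (\<forall>x e. e > 0 \<longrightarrow> (\<exists>y. alg_over_Fq_theta q \<theta> y \<and> av (x - y) < e))"

definition twc :: "nat \<Rightarrow> int \<Rightarrow> 'c::field \<Rightarrow> 'c" where
  "twc q n c = (if n \<ge> 0 then c ^ (q ^ nat n) else (THE y. y ^ (q ^ nat (- n)) = c))"

text \<open>Multi-indices in N^s are functions nat => nat vanishing from s on.
  Elements of T_s are coefficient functions (multi-index => C).\<close>
definition MI :: "nat \<Rightarrow> (nat \<Rightarrow> nat) set" where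
  "MI s = {\<alpha>. \<forall>i\<ge>s. \<alpha> i = 0}"

definition Tate :: "nat \<Rightarrow> ('c::field \<Rightarrow> real) \<Rightarrow> ((nat \<Rightarrow> nat) \<Rightarrow> 'c) set" where
  "Tate s av = {f. (\<forall>\<alpha>. \<alpha> \<notin> MI s \<longrightarrow> f \<alpha> = 0) \<and>
                   (\<forall>e>0. finite {\<alpha>. av (f \<alpha>) \<ge> e})}"

definition gnorm :: "('c::field \<Rightarrow> real) \<Rightarrow> ((nat \<Rightarrow> nat) \<Rightarrow> 'c) \<Rightarrow> real" where
  "gnorm av f = Sup (range (\<lambda>\<alpha>. av (f \<alpha>)))"

definition tzero :: "(nat \<Rightarrow> nat) \<Rightarrow> 'c::field" where
  "tzero = (\<lambda>\<alpha>. 0)"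

definition tone :: "(nat \<Rightarrow> nat) \<Rightarrow> 'c::field" where
  "tone = (\<lambda>\<alpha>. if \<alpha> = (\<lambda>i. 0) then 1 else 0)"

definition tconst :: "'c::field \<Rightarrow> (nat \<Rightarrow> nat) \<Rightarrow> 'c" where
  "tconst c = (\<lambda>\<alpha>. if \<alpha> = (\<lambda>i. 0) then c else 0)"

definition tmul :: "nat \<Rightarrow> ((nat \<Rightarrow> nat) \<Rightarrow> 'c::field) \<Rightarrow> ((nat \<Rightarrow> nat) \<Rightarrow> 'c) \<Rightarrow> (nat \<Rightarrow> nat) \<Rightarrow> 'c" where
  "tmul s f g = (\<lambda>\<alpha>. \<Sum>\<beta>\<in>{\<beta>\<in>MI s. \<forall>i. \<beta> i \<le> \<alpha> i}. f \<beta> * g (\<lambda>i. \<alpha> i - \<beta> i))"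

definition tunit :: "nat \<Rightarrow> ('c::field \<Rightarrow> real) \<Rightarrow> ((nat \<Rightarrow> nat) \<Rightarrow> 'c) \<Rightarrow> bool" where
  "tunit s av f \<longleftrightarrow> f \<in> Tate s av \<and> (\<exists>g\<in>Tate s av. tmul s f g = tone)"

definition tinv :: "nat \<Rightarrow> ('c::field \<Rightarrow> real) \<Rightarrow> ((nat \<Rightarrow> nat) \<Rightarrow> 'c) \<Rightarrow> (nat \<Rightarrow> nat) \<Rightarrow> 'c" where
  "tinv s av f = (SOME g. g \<in> Tate s av \<and> tmul s f g = tone)"

definition ttw :: "nat \<Rightarrow> int \<Rightarrow> ((nat \<Rightarrow> nat) \<Rightarrow> 'c::field) \<Rightarrow> (nat \<Rightarrow> nat) \<Rightarrow> 'c" where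
  "ttw q n f = (\<lambda>\<alpha>. twc q n (f \<alpha>))"

section \<open>T_s{z/theta}: power series in z with coefficients in T_s\<close>

type_synonym 'c zser = "nat \<Rightarrow> (nat \<Rightarrow> nat) \<Rightarrow> 'c"

definition Zser :: "nat \<Rightarrow> nat \<Rightarrow> ('c::field \<Rightarrow> real) \<Rightarrow> 'c zser set" where
  "Zser q s av = {F. (\<forall>n. F n \<in> Tate s av) \<and>
                     (\<lambda>n. real q ^ n * gnorm av (F n)) \<longlonglongrightarrow> 0}"

definition Tpolyz :: "nat \<Rightarrow> ('c::field \<Rightarrow> real) \<Rightarrow> 'c zser set" where
  "Tpolyz s av = {F. (\<forall>n. F n \<in> Tate s av) \<and> finite {n. F n \<noteq> tzero}}"

definition Fqtz :: "nat \<Rightarrow> nat \<Rightarrow> 'c::field zser set" where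
  "Fqtz q s = {F. finite {n. F n \<noteq> tzero} \<and>
                 (\<forall>n. finite {\<alpha>. F n \<alpha> \<noteq> 0}) \<and>
                 (\<forall>n \<alpha>. \<alpha> \<notin> MI s \<longrightarrow> F n \<alpha> = 0) \<and>
                 (\<forall>n \<alpha>. in_Fq q (F n \<alpha>))}"

definition zzero :: "'c::field zser" where
  "zzero = (\<lambda>n. tzero)"

definition zone :: "'c::field zser" where
  "zone = (\<lambda>n. if n = 0 then tone else tzero)"

definition zmul :: "nat \<Rightarrow> 'c::field zser \<Rightarrow> 'c zser \<Rightarrow> 'c zser" where
  "zmul s F G = (\<lambda>n \<alpha>. \<Sum>k\<le>n. tmul s (F k) (G (n - k)) \<alpha>)"

definition ztw :: "nat \<Rightarrow> int \<Rightarrow> 'c::field zser \<Rightarrow> 'c zser" where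
  "ztw q m F = (\<lambda>n. ttw q m (F n))"

section \<open>Row vectors and r x r matrices (0-based indices below r, zero elsewhere)\<close>

definition rowvecs :: "nat \<Rightarrow> 'c zser set \<Rightarrow> (nat \<Rightarrow> 'c::field zser) set" where
  "rowvecs r R = {g. (\<forall>j<r. g j \<in> R) \<and> (\<forall>j\<ge>r. g j = zzero)}"

definition mats :: "nat \<Rightarrow> 'c zser set \<Rightarrow> (nat \<Rightarrow> nat \<Rightarrow> 'c::field zser) set" where
  "mats r R = {M. (\<forall>i<r. \<forall>j<r. M i j \<in> R) \<and> (\<forall>i j. (i \<ge> r \<or> j \<ge> r) \<longrightarrow> M i j = zzero)}"

definition vecmat :: "nat \<Rightarrow> nat \<Rightarrow> (nat \<Rightarrow> 'c::field zser) \<Rightarrow> (nat \<Rightarrow> nat \<Rightarrow> 'c zser) \<Rightarrow> nat \<Rightarrow> 'c zser" where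
  "vecmat s r g M = (\<lambda>j. if j < r then (\<lambda>n \<alpha>. \<Sum>k<r. zmul s (g k) (M k j) n \<alpha>) else zzero)"

definition matmul :: "nat \<Rightarrow> nat \<Rightarrow> (nat \<Rightarrow> nat \<Rightarrow> 'c::field zser) \<Rightarrow> (nat \<Rightarrow> nat \<Rightarrow> 'c zser) \<Rightarrow> nat \<Rightarrow> nat \<Rightarrow> 'c zser" where
  "matmul s r M N = (\<lambda>i j. if i < r \<and> j < r then (\<lambda>n \<alpha>. \<Sum>k<r. zmul s (M i k) (N k j) n \<alpha>) else zzero)"

definition idmat :: "nat \<Rightarrow> nat \<Rightarrow> nat \<Rightarrow> 'c::field zser" where
  "idmat r = (\<lambda>i j. if i < r \<and> i = j then zone else zzero)"

definition vtw :: "nat \<Rightarrow> int \<Rightarrow> (nat \<Rightarrow> 'c::field zser) \<Rightarrow> nat \<Rightarrow> 'c zser" where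
  "vtw q m g = (\<lambda>j. ztw q m (g j))"

definition mtw :: "nat \<Rightarrow> int \<Rightarrow> (nat \<Rightarrow> nat \<Rightarrow> 'c::field zser) \<Rightarrow> nat \<Rightarrow> nat \<Rightarrow> 'c zser" where
  "mtw q m M = (\<lambda>i j. ztw q m (M i j))"

definition lincomb :: "nat \<Rightarrow> nat \<Rightarrow> (nat \<Rightarrow> 'c::field zser) \<Rightarrow> (nat \<Rightarrow> nat \<Rightarrow> 'c zser) \<Rightarrow> nat \<Rightarrow> 'c zser" where
  "lincomb s r c b = (\<lambda>j. if j < r then (\<lambda>n \<alpha>. \<Sum>i<r. zmul s (c i) (b i j) n \<alpha>) else zzero)"

section \<open>The matrix Phi attached to phi_theta = theta + A_1 tau + ... + A_r tau^r\<close>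

text \<open>A i is the coefficient A_i (1 <= i <= r).\<close>
definition PhiMat :: "nat \<Rightarrow> nat \<Rightarrow> ('c::field \<Rightarrow> real) \<Rightarrow> 'c \<Rightarrow> nat \<Rightarrow> (nat \<Rightarrow> (nat \<Rightarrow> nat) \<Rightarrow> 'c)
                      \<Rightarrow> nat \<Rightarrow> nat \<Rightarrow> 'c zser" where
  "PhiMat q s av \<theta> r A = (\<lambda>i j.
     (let ia = tinv s av (ttw q (- int r) (A r)) in
      if i < r \<and> j < r then
        (if i = r - 1 then
           (if j = 0 then
              (\<lambda>n. if n = 0 then tmul s (tconst (- \<theta>)) ia
                   else if n = 1 then ia else tzero)
            else
              (\<lambda>n. if n = 0 then tmul s (tconst (-1)) (tmul s (ttw q (- int j) (A j)) ia)
                   else tzero))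
         else (if j = i + 1 then zone else zzero))
      else zzero))"

definition Vphi :: "nat \<Rightarrow> nat \<Rightarrow> ('c::field \<Rightarrow> real) \<Rightarrow> 'c \<Rightarrow> nat \<Rightarrow> (nat \<Rightarrow> (nat \<Rightarrow> nat) \<Rightarrow> 'c)
                    \<Rightarrow> (nat \<Rightarrow> 'c zser) set" where
  "Vphi q s av \<theta> r A = {g \<in> rowvecs r (Zser q s av).
       vecmat s r (vtw q (-1) g) (PhiMat q s av \<theta> r A) = g}"

end

theory Submission
  imports Defs "HOL-Computational_Algebra.Primes"
begin

text \<open>For \<open>g \<in> V\<^sub>\<phi>\<close> put \<open>h = g \<Psi>\<close>. The functional equation \<open>\<Psi>^(-1) = \<Phi> \<Psi>\<close> gives
  \<open>h^(-1) = g^(-1) \<Phi> \<Psi> = g \<Psi> = h\<close>, so every coefficient of \<open>h\<close> is fixed by the inverse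
  \<open>q\<close>-Frobenius, i.e. lies in \<open>\<bbbF>\<^sub>q\<close>. Nonzero elements of \<open>\<bbbF>\<^sub>q\<close> have absolute value 1, so
  the decay condition defining \<open>\<bbbT>\<^sub>s{z/\<theta>}\<close> forces \<open>h\<close> to be a polynomial in \<open>z\<close>.
  Conversely, inverting the functional equation gives \<open>(\<Psi>\<inverse>)^(-1) \<Phi> = \<Psi>\<inverse>\<close>, so
  \<open>h \<Psi>\<inverse> \<in> V\<^sub>\<phi>\<close> for every row \<open>h\<close> over \<open>\<bbbF>\<^sub>q[t\<^sub>1, \<dots>, t\<^sub>s][z]\<close>. This gives (a), and (b)
  with the rows of \<open>\<Psi>\<inverse>\<close> as basis.

  For (c), the equation \<open>g^(-1) \<Phi> = g\<close> reads \<open>g\<^sub>0 = g\<^sub>r\<^sub>-\<^sub>1^(-1) (z - \<theta>) / A\<^sub>r^(-r)\<close> and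
  \<open>g\<^sub>j = g\<^sub>j\<^sub>-\<^sub>1^(-1) + c\<^sub>j g\<^sub>r\<^sub>-\<^sub>1^(-1)\<close> with \<open>c\<^sub>j\<close> constant in \<open>z\<close>. If \<open>g\<^sub>r\<^sub>-\<^sub>1\<close> were a
  nonzero polynomial of degree \<open>N\<close>, the coefficients of \<open>z\<^sup>N\<^sup>+\<^sup>1\<close> in \<open>g\<^sub>0, \<dots>, g\<^sub>r\<^sub>-\<^sub>1\<close> would
  in turn be nonzero, which is absurd; and if \<open>g\<^sub>r\<^sub>-\<^sub>1 = 0\<close>, the same recursion makes every
  \<open>g\<^sub>j\<close> vanish.\<close>

section \<open>Products of series and matrices\<close>

definition MI_below :: "nat \<Rightarrow> (nat \<Rightarrow> nat) \<Rightarrow> (nat \<Rightarrow> nat) set" where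
  "MI_below s \<alpha> = {\<beta>\<in>MI s. \<forall>i. \<beta> i \<le> \<alpha> i}"

definition supported :: "nat \<Rightarrow> ((nat \<Rightarrow> nat) \<Rightarrow> 'c::zero) \<Rightarrow> bool" where
  "supported s f \<longleftrightarrow> (\<forall>\<alpha>. \<alpha> \<notin> MI s \<longrightarrow> f \<alpha> = 0)"

lemma finite_MI_below: "finite (MI_below s \<alpha>)"
proof (rule finite_imageD)
  let ?prefix = "\<lambda>\<beta>::nat \<Rightarrow> nat. map \<beta> [0..<s]"
  have "\<alpha> i \<le> (\<Sum>j<s. \<alpha> j)" if "i < s" for i
    using that by (intro member_le_sum) auto
  then have "?prefix ` MI_below s \<alpha> \<subseteq> {xs. set xs \<subseteq> {..\<Sum>j<s. \<alpha> j} \<and> length xs = s}"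
    by (auto simp: MI_below_def) (use le_trans in blast)
  then show "finite (?prefix ` MI_below s \<alpha>)"
    by (rule finite_subset) (simp add: finite_lists_length_eq)
  show "inj_on ?prefix (MI_below s \<alpha>)"
  proof (rule inj_onI)
    fix \<beta> \<gamma> assume "\<beta> \<in> MI_below s \<alpha>" "\<gamma> \<in> MI_below s \<alpha>" "?prefix \<beta> = ?prefix \<gamma>"
    then show "\<beta> = \<gamma>"
      by (auto simp: MI_below_def MI_def fun_eq_iff)
  qed
qed

lemma tmul_eq: "tmul s f g \<alpha> = (\<Sum>\<beta>\<in>MI_below s \<alpha>. f \<beta> * g (\<lambda>i. \<alpha> i - \<beta> i))"
  by (simp add: tmul_def MI_below_def)

lemma zero_in_MI_below: "(\<lambda>i. 0) \<in> MI_below s \<alpha>"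
  by (simp add: MI_below_def MI_def)

lemma diff_not_in_MI: "\<alpha> \<notin> MI s \<Longrightarrow> \<beta> \<in> MI s \<Longrightarrow> (\<lambda>i. \<alpha> i - \<beta> i) \<notin> MI s"
  by (auto simp: MI_def)

lemma supported_tmul: "supported s g \<Longrightarrow> supported s (tmul s f g)"
  unfolding supported_def tmul_eq by (auto intro!: sum.neutral simp: MI_below_def diff_not_in_MI)

lemma supported_tone: "supported s (tone :: _ \<Rightarrow> 'c::field)"
  by (auto simp: supported_def tone_def MI_def)

lemma supported_tzero: "supported s (tzero :: _ \<Rightarrow> 'c::field)"
  by (simp add: supported_def tzero_def)

lemma supported_sum: "(\<And>i. i \<in> I \<Longrightarrow> supported s (f i)) \<Longrightarrow> supported s (\<lambda>\<alpha>. \<Sum>i\<in>I. f i \<alpha> :: 'c::field)"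
  by (simp add: supported_def)

lemma tmul_tone_left: "tmul s tone g = (g :: _ \<Rightarrow> 'c::field)"
proof
  fix \<alpha>
  have "tmul s tone g \<alpha> = (\<Sum>\<beta>\<in>MI_below s \<alpha>. if \<beta> = (\<lambda>i. 0) then g \<alpha> else 0)"
    unfolding tmul_eq by (intro sum.cong) (auto simp: tone_def)
  then show "tmul s tone g \<alpha> = g \<alpha>"
    using zero_in_MI_below finite_MI_below by simp
qed

lemma tmul_tone_right:
  assumes "supported s f"
  shows "tmul s f tone = (f :: _ \<Rightarrow> 'c::field)"
proof
  fix \<alpha>
  have "(\<lambda>i. \<alpha> i - \<beta> i) = (\<lambda>i. 0) \<longleftrightarrow> \<beta> = \<alpha>" if "\<beta> \<in> MI_below s \<alpha>" for \<beta>
    using that by (auto simp: MI_below_def fun_eq_iff intro: le_antisym)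
  then have "tmul s f tone \<alpha> = (\<Sum>\<beta>\<in>MI_below s \<alpha>. if \<beta> = \<alpha> then f \<alpha> else 0)"
    unfolding tmul_eq by (intro sum.cong) (auto simp: tone_def)
  also have "\<dots> = f \<alpha>"
    using assms finite_MI_below by (cases "\<alpha> \<in> MI s") (auto simp: MI_below_def supported_def)
  finally show "tmul s f tone \<alpha> = f \<alpha>" .
qed

lemma tmul_0_left [simp]: "tmul s (\<lambda>_. 0) g = (\<lambda>_. 0 :: 'c::field)"
  and tmul_0_right [simp]: "tmul s f (\<lambda>_. 0) = (\<lambda>_. 0 :: 'c::field)"
  by (simp_all add: tmul_eq fun_eq_iff)

lemma tmul_tzero_left [simp]: "tmul s tzero g = (tzero :: _ \<Rightarrow> 'c::field)"
  and tmul_tzero_right [simp]: "tmul s f tzero = (tzero :: _ \<Rightarrow> 'c::field)"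
  by (simp_all add: tzero_def)

lemma tmul_sum_left: "tmul s (\<lambda>\<alpha>. \<Sum>i\<in>I. fs i \<alpha>) g \<alpha> = (\<Sum>i\<in>I. tmul s (fs i) g \<alpha> :: 'c::field)"
  and tmul_sum_right: "tmul s f (\<lambda>\<alpha>. \<Sum>i\<in>I. gs i \<alpha>) \<alpha> = (\<Sum>i\<in>I. tmul s f (gs i) \<alpha> :: 'c::field)"
  unfolding tmul_eq by (simp_all add: sum_distrib_left sum_distrib_right sum.swap[of _ I])

lemma bij_betw_MI_below_pairs:
  "bij_betw (\<lambda>(\<beta>, \<gamma>). (\<gamma>, \<lambda>i. \<beta> i - \<gamma> i))
     (SIGMA \<beta>:MI_below s \<alpha>. MI_below s \<beta>) (SIGMA \<gamma>:MI_below s \<alpha>. MI_below s (\<lambda>i. \<alpha> i - \<gamma> i))"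
proof (rule bij_betw_byWitness[where f' = "\<lambda>(\<gamma>, \<delta>). (\<lambda>i. \<gamma> i + \<delta> i, \<gamma>)"])
  show "\<forall>a\<in>SIGMA \<beta>:MI_below s \<alpha>. MI_below s \<beta>.
          (\<lambda>(\<gamma>, \<delta>). (\<lambda>i. \<gamma> i + \<delta> i, \<gamma>)) ((\<lambda>(\<beta>, \<gamma>). (\<gamma>, \<lambda>i. \<beta> i - \<gamma> i)) a) = a"
    by (auto simp: MI_below_def fun_eq_iff)
  show "\<forall>b\<in>SIGMA \<gamma>:MI_below s \<alpha>. MI_below s (\<lambda>i. \<alpha> i - \<gamma> i).
          (\<lambda>(\<beta>, \<gamma>). (\<gamma>, \<lambda>i. \<beta> i - \<gamma> i)) ((\<lambda>(\<gamma>, \<delta>). (\<lambda>i. \<gamma> i + \<delta> i, \<gamma>)) b) = b"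
    by auto
  show "(\<lambda>(\<beta>, \<gamma>). (\<gamma>, \<lambda>i. \<beta> i - \<gamma> i)) ` (SIGMA \<beta>:MI_below s \<alpha>. MI_below s \<beta>)
          \<subseteq> (SIGMA \<gamma>:MI_below s \<alpha>. MI_below s (\<lambda>i. \<alpha> i - \<gamma> i))"
    by (auto simp: MI_below_def MI_def intro: order_trans diff_le_mono)
  show "(\<lambda>(\<gamma>, \<delta>). (\<lambda>i. \<gamma> i + \<delta> i, \<gamma>)) ` (SIGMA \<gamma>:MI_below s \<alpha>. MI_below s (\<lambda>i. \<alpha> i - \<gamma> i))
          \<subseteq> (SIGMA \<beta>:MI_below s \<alpha>. MI_below s \<beta>)"
    by (auto simp: MI_below_def MI_def) (metis add.commute le_diff_conv2)
qed

lemma tmul_assoc: "tmul s (tmul s f g) h = tmul s f (tmul s g h :: _ \<Rightarrow> 'c::field)"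
proof
  fix \<alpha>
  have "tmul s (tmul s f g) h \<alpha> =
      (\<Sum>(\<beta>, \<gamma>)\<in>(SIGMA \<beta>:MI_below s \<alpha>. MI_below s \<beta>). f \<gamma> * g (\<lambda>i. \<beta> i - \<gamma> i) * h (\<lambda>i. \<alpha> i - \<beta> i))"
    unfolding tmul_eq by (simp add: sum_distrib_right sum.Sigma finite_MI_below)
  also have "\<dots> = (\<Sum>(\<gamma>, \<delta>)\<in>(SIGMA \<gamma>:MI_below s \<alpha>. MI_below s (\<lambda>i. \<alpha> i - \<gamma> i)).
                      f \<gamma> * (g \<delta> * h (\<lambda>i. \<alpha> i - \<gamma> i - \<delta> i)))"
    by (subst sum.reindex_bij_betw[OF bij_betw_MI_below_pairs, symmetric])
      (auto intro!: sum.cong simp: MI_below_def mult.assoc)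
  also have "\<dots> = tmul s f (tmul s g h) \<alpha>"
    unfolding tmul_eq by (simp add: sum_distrib_left sum.Sigma finite_MI_below)
  finally show "tmul s (tmul s f g) h \<alpha> = tmul s f (tmul s g h) \<alpha>" .
qed

lemma complement_in_MI_below: "\<alpha> \<in> MI s \<Longrightarrow> \<beta> \<in> MI_below s \<alpha> \<Longrightarrow> (\<lambda>i. \<alpha> i - \<beta> i) \<in> MI_below s \<alpha>"
  by (auto simp: MI_below_def MI_def)

lemma tmul_commute:
  assumes "supported s f" and "supported s g"
  shows "tmul s f g = (tmul s g f :: _ \<Rightarrow> 'c::field)"
proof
  fix \<alpha>
  show "tmul s f g \<alpha> = tmul s g f \<alpha>"
  proof (cases "\<alpha> \<in> MI s")
    case True
    show ?thesis unfolding tmul_eq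
      by (rule sum.reindex_bij_witness[where i = "\<lambda>\<beta> i. \<alpha> i - \<beta> i" and j = "\<lambda>\<beta> i. \<alpha> i - \<beta> i"])
        (auto simp: complement_in_MI_below[OF True] mult.commute,
         auto simp: MI_below_def fun_eq_iff)
  next
    case False
    then show ?thesis
      using supported_tmul[OF assms(1), of g] supported_tmul[OF assms(2), of f] by (simp add: supported_def)
  qed
qed

definition zsupported :: "nat \<Rightarrow> 'c::field zser \<Rightarrow> bool" where
  "zsupported s F \<longleftrightarrow> (\<forall>n. supported s (F n))"

lemma zmul_eq: "zmul s F G n \<alpha> = (\<Sum>k\<le>n. tmul s (F k) (G (n - k)) \<alpha>)"
  by (simp add: zmul_def)

lemma zsupported_zmul: "zsupported s G \<Longrightarrow> zsupported s (zmul s F G)"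
  unfolding zsupported_def zmul_def by (auto intro!: supported_sum supported_tmul)

lemma zsupported_zzero: "zsupported s (zzero :: 'c::field zser)"
  and zsupported_zone: "zsupported s (zone :: 'c::field zser)"
  by (simp_all add: zsupported_def zzero_def zone_def supported_tzero supported_tone)

lemma zmul_zone_left: "zmul s zone G = (G :: 'c::field zser)"
proof (intro ext)
  fix n \<alpha>
  have "zmul s zone G n \<alpha> = (\<Sum>k\<le>n. if k = 0 then G n \<alpha> else 0)"
    unfolding zmul_eq by (intro sum.cong) (auto simp: zone_def tmul_tone_left tzero_def)
  then show "zmul s zone G n \<alpha> = G n \<alpha>" by simp
qed

lemma zmul_zone_right: "zsupported s F \<Longrightarrow> zmul s F zone = (F :: 'c::field zser)"
proof (intro ext)
  fix n \<alpha> assume "zsupported s F"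
  then have "zmul s F zone n \<alpha> = (\<Sum>k\<le>n. if k = n then F n \<alpha> else 0)"
    unfolding zmul_eq by (intro sum.cong) (auto simp: zone_def tmul_tone_right tzero_def zsupported_def)
  then show "zmul s F zone n \<alpha> = F n \<alpha>" by simp
qed

lemma zmul_0_left [simp]: "zmul s (\<lambda>n \<alpha>. 0) G = (\<lambda>n \<alpha>. 0 :: 'c::field)"
  and zmul_0_right [simp]: "zmul s F (\<lambda>n \<alpha>. 0) = (\<lambda>n \<alpha>. 0 :: 'c::field)"
  by (simp_all add: zmul_def fun_eq_iff)

lemma zmul_zzero_left [simp]: "zmul s zzero G = (zzero :: 'c::field zser)"
  and zmul_zzero_right [simp]: "zmul s F zzero = (zzero :: 'c::field zser)"
  by (simp_all add: zzero_def tzero_def)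

lemma zmul_sum_left: "zmul s (\<lambda>n \<alpha>. \<Sum>i\<in>I. Fs i n \<alpha>) G n \<alpha> = (\<Sum>i\<in>I. zmul s (Fs i) G n \<alpha> :: 'c::field)"
  and zmul_sum_right: "zmul s F (\<lambda>n \<alpha>. \<Sum>i\<in>I. Gs i n \<alpha>) n \<alpha> = (\<Sum>i\<in>I. zmul s F (Gs i) n \<alpha> :: 'c::field)"
  unfolding zmul_eq by (simp_all add: tmul_sum_left tmul_sum_right sum.swap[of _ I])

lemma zmul_assoc: "zmul s (zmul s F G) H = zmul s F (zmul s G H :: 'c::field zser)"
proof (intro ext)
  fix n \<alpha>
  define a where "a m l = tmul s (F m) (tmul s (G l) (H (n - (m + l)))) \<alpha>" for m l
  have "zmul s (zmul s F G) H n \<alpha> = (\<Sum>k\<le>n. \<Sum>m\<le>k. a m (k - m))"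
    unfolding zmul_eq zmul_def a_def by (simp add: tmul_sum_left tmul_assoc)
  also have "\<dots> = (\<Sum>(m, l)\<in>{(i, j). i + j \<le> n}. a m l)"
    by (rule sum.triangle_reindex_eq[symmetric])
  also have "{(i, j). i + j \<le> n} = (SIGMA m:{..n}. {..n - m})" by auto
  also have "(\<Sum>(m, l)\<in>(SIGMA m:{..n}. {..n - m}). a m l) = (\<Sum>m\<le>n. \<Sum>l\<le>n - m. a m l)"
    by (rule sum.Sigma[symmetric]) auto
  also have "\<dots> = zmul s F (zmul s G H) n \<alpha>"
    unfolding zmul_eq zmul_def a_def by (simp add: tmul_sum_right)
  finally show "zmul s (zmul s F G) H n \<alpha> = zmul s F (zmul s G H) n \<alpha>" .
qed

lemma sum_zmul_unit_right:
  assumes "j < (r::nat)" and "zsupported s (F j)"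
  shows "(\<Sum>k<r. zmul s (F k) (if k = j then zone else zzero) n \<alpha>) = (F j n \<alpha> :: 'c::field)"
proof -
  have "(\<Sum>k<r. zmul s (F k) (if k = j then zone else zzero) n \<alpha>) = (\<Sum>k<r. if k = j then F j n \<alpha> else 0)"
    using assms(2) by (intro sum.cong) (simp_all add: zmul_zone_right zzero_def tzero_def)
  also have "\<dots> = F j n \<alpha>" using assms(1) by (subst sum.delta) simp_all
  finally show ?thesis .
qed

lemma sum_zmul_unit_left:
  assumes "i < (r::nat)"
  shows "(\<Sum>k<r. zmul s (if k = i then zone else zzero) (F k) n \<alpha>) = (F i n \<alpha> :: 'c::field)"
proof -
  have "(\<Sum>k<r. zmul s (if k = i then zone else zzero) (F k) n \<alpha>) = (\<Sum>k<r. if k = i then F i n \<alpha> else 0)"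
    by (intro sum.cong) (simp_all add: zmul_zone_left zzero_def tzero_def)
  also have "\<dots> = F i n \<alpha>" using assms by (subst sum.delta) simp_all
  finally show ?thesis .
qed

lemma vecmat_assoc: "vecmat s r (vecmat s r g M) N = vecmat s r g (matmul s r M (N :: nat \<Rightarrow> nat \<Rightarrow> 'c::field zser))"
proof (intro ext)
  fix j n \<alpha>
  show "vecmat s r (vecmat s r g M) N j n \<alpha> = vecmat s r g (matmul s r M N) j n \<alpha>"
  proof (cases "j < r")
    case True
    have "vecmat s r (vecmat s r g M) N j n \<alpha> = (\<Sum>k<r. \<Sum>l<r. zmul s (zmul s (g l) (M l k)) (N k j) n \<alpha>)"
      using True by (simp add: vecmat_def zmul_sum_left)
    also have "\<dots> = (\<Sum>l<r. \<Sum>k<r. zmul s (g l) (zmul s (M l k) (N k j)) n \<alpha>)"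
      by (subst sum.swap) (simp add: zmul_assoc)
    also have "\<dots> = vecmat s r g (matmul s r M N) j n \<alpha>"
      using True by (simp add: vecmat_def matmul_def zmul_sum_right)
    finally show ?thesis .
  qed (simp add: vecmat_def)
qed

lemma matmul_assoc: "matmul s r (matmul s r L M) N = matmul s r L (matmul s r M (N :: nat \<Rightarrow> nat \<Rightarrow> 'c::field zser))"
proof (intro ext)
  fix i j n \<alpha>
  show "matmul s r (matmul s r L M) N i j n \<alpha> = matmul s r L (matmul s r M N) i j n \<alpha>"
  proof (cases "i < r \<and> j < r")
    case True
    have "matmul s r (matmul s r L M) N i j n \<alpha> = (\<Sum>k<r. \<Sum>l<r. zmul s (zmul s (L i l) (M l k)) (N k j) n \<alpha>)"
      using True by (simp add: matmul_def zmul_sum_left)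
    also have "\<dots> = (\<Sum>l<r. \<Sum>k<r. zmul s (L i l) (zmul s (M l k) (N k j)) n \<alpha>)"
      by (subst sum.swap) (simp add: zmul_assoc)
    also have "\<dots> = matmul s r L (matmul s r M N) i j n \<alpha>"
      using True by (simp add: matmul_def zmul_sum_right)
    finally show ?thesis .
  qed (auto simp: matmul_def)
qed

lemma vecmat_idmat:
  assumes "\<And>j. j < r \<Longrightarrow> zsupported s (g j)" and "\<And>j. r \<le> j \<Longrightarrow> g j = zzero"
  shows "vecmat s r g (idmat r) = (g :: nat \<Rightarrow> 'c::field zser)"
proof (intro ext)
  fix j n \<alpha>
  show "vecmat s r g (idmat r) j n \<alpha> = g j n \<alpha>"
  proof (cases "j < r")
    case True
    then have "vecmat s r g (idmat r) j n \<alpha> = (\<Sum>k<r. zmul s (g k) (if k = j then zone else zzero) n \<alpha>)"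
      by (auto simp: vecmat_def idmat_def intro!: sum.cong)
    then show ?thesis using sum_zmul_unit_right[of j r s g] True assms(1) by simp
  qed (simp add: vecmat_def assms(2))
qed

lemma matmul_idmat_right:
  assumes "\<And>i j. i < r \<Longrightarrow> j < r \<Longrightarrow> zsupported s (M i j)" and "\<And>i j. r \<le> i \<or> r \<le> j \<Longrightarrow> M i j = zzero"
  shows "matmul s r M (idmat r) = (M :: nat \<Rightarrow> nat \<Rightarrow> 'c::field zser)"
proof (intro ext)
  fix i j n \<alpha>
  show "matmul s r M (idmat r) i j n \<alpha> = M i j n \<alpha>"
  proof (cases "i < r \<and> j < r")
    case True
    then have "matmul s r M (idmat r) i j n \<alpha> = (\<Sum>k<r. zmul s (M i k) (if k = j then zone else zzero) n \<alpha>)"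
      by (auto simp: matmul_def idmat_def intro!: sum.cong)
    then show ?thesis using sum_zmul_unit_right[of j r s "M i"] True assms(1) by simp
  qed (use assms(2) in \<open>auto simp: matmul_def\<close>)
qed

lemma matmul_idmat_left:
  assumes "\<And>i j. r \<le> i \<or> r \<le> j \<Longrightarrow> M i j = zzero"
  shows "matmul s r (idmat r) M = (M :: nat \<Rightarrow> nat \<Rightarrow> 'c::field zser)"
proof (intro ext)
  fix i j n \<alpha>
  show "matmul s r (idmat r) M i j n \<alpha> = M i j n \<alpha>"
  proof (cases "i < r \<and> j < r")
    case True
    then have "matmul s r (idmat r) M i j n \<alpha> = (\<Sum>k<r. zmul s (if k = i then zone else zzero) (M k j) n \<alpha>)"
      by (auto simp: matmul_def idmat_def intro!: sum.cong)
    then show ?thesis using sum_zmul_unit_left[of i r s "\<lambda>k. M k j"] True by simp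
  qed (use assms in \<open>auto simp: matmul_def\<close>)
qed

lemma vecmat_unit_row:
  assumes "i < r" and "\<And>k j. r \<le> k \<or> r \<le> j \<Longrightarrow> M k j = zzero"
  shows "vecmat s r (\<lambda>j. if j = i then zone else zzero) M = (M i :: nat \<Rightarrow> 'c::field zser)"
proof (intro ext)
  fix j n \<alpha>
  show "vecmat s r (\<lambda>j. if j = i then zone else zzero) M j n \<alpha> = M i j n \<alpha>"
    using sum_zmul_unit_left[of i r s "\<lambda>k. M k j"] assms by (cases "j < r") (auto simp: vecmat_def)
qed

lemma zsupported_matmul: "(\<And>k j. zsupported s (M k j)) \<Longrightarrow> zsupported s (matmul s r L M i j :: 'c::field zser)"
  unfolding matmul_def zsupported_def
  by (auto intro!: supported_sum simp: zsupported_zmul[unfolded zsupported_def] zzero_def supported_tzero)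

lemma lincomb_eq_vecmat: "lincomb s r c b = vecmat s r c b"
  by (simp add: lincomb_def vecmat_def)

lemma rowvecs_mono: "R \<subseteq> S \<Longrightarrow> rowvecs r R \<subseteq> rowvecs r S"
  by (auto simp: rowvecs_def)

section \<open>The field \<open>\<complex>\<^sub>\<infinity>\<close> and inverse Frobenius twists\<close>

text \<open>The properties of \<open>\<complex>\<^sub>\<infinity>\<close> that the argument uses.\<close>
locale valued_frobenius_field =
  fixes q :: nat and av :: "'c::field \<Rightarrow> real"
  assumes q_ge_2: "2 \<le> q"
    and power_q_add: "\<And>x y :: 'c. (x + y) ^ q = x ^ q + y ^ q"
    and power_q_surj: "\<And>c :: 'c. \<exists>y. y ^ q = c"
    and nonarch: "nonarch_abs av"
begin

lemma power_qn_add: "(x + y) ^ (q ^ n) = x ^ (q ^ n) + (y::'c) ^ (q ^ n)"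
  by (induction n arbitrary: x y) (simp_all add: power_mult power_q_add)

lemma power_qn_inj: "x ^ (q ^ n) = y ^ (q ^ n) \<Longrightarrow> x = (y::'c)"
  using power_qn_add[of "x - y" y n] q_ge_2 by simp

lemma power_qn_surj: "\<exists>y. y ^ (q ^ n) = (c::'c)"
proof (induction n arbitrary: c)
  case (Suc n)
  obtain z where "z ^ q = c" using power_q_surj by blast
  moreover obtain y where "y ^ (q ^ n) = z" using Suc by blast
  ultimately have "y ^ (q ^ Suc n) = c" by (simp only: power_Suc2 power_mult)
  then show ?case by blast
qed simp

lemma twc_nonpos_eq_The: "m \<le> 0 \<Longrightarrow> twc q m c = (THE y. y ^ (q ^ nat (- m)) = (c::'c))"
  by (cases "m = 0") (simp_all add: twc_def)

lemma twc_power_cancel: "m \<le> 0 \<Longrightarrow> twc q m c ^ (q ^ nat (- m)) = (c::'c)"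
  unfolding twc_nonpos_eq_The by (rule theI') (use power_qn_surj power_qn_inj in blast)

lemma twc_eqI: "m \<le> 0 \<Longrightarrow> y ^ (q ^ nat (- m)) = c \<Longrightarrow> twc q m c = (y::'c)"
  using power_qn_inj[of "twc q m c" "nat (- m)" y] twc_power_cancel[of m c] by simp

lemma twc_add: "m \<le> 0 \<Longrightarrow> twc q m (x + y) = twc q m x + twc q m (y::'c)"
  by (rule twc_eqI) (simp_all only: power_qn_add twc_power_cancel)

lemma twc_mult: "m \<le> 0 \<Longrightarrow> twc q m (x * y) = twc q m x * twc q m (y::'c)"
  by (rule twc_eqI) (simp_all only: power_mult_distrib twc_power_cancel)

lemma twc_0 [simp]: "m \<le> 0 \<Longrightarrow> twc q m 0 = (0::'c)"
  by (rule twc_eqI) (use q_ge_2 in simp_all)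

lemma twc_1 [simp]: "m \<le> 0 \<Longrightarrow> twc q m 1 = (1::'c)"
  by (rule twc_eqI) simp_all

lemma twc_eq_0_iff [simp]: "m \<le> 0 \<Longrightarrow> twc q m x = 0 \<longleftrightarrow> x = (0::'c)"
  using twc_power_cancel[of m x] q_ge_2 by auto

lemma twc_sum: "m \<le> 0 \<Longrightarrow> twc q m (\<Sum>i\<in>I. f i) = (\<Sum>i\<in>I. twc q m (f i :: 'c))"
  by (induction I rule: infinite_finite_induct) (simp_all add: twc_add)

lemma twc_minus_one_fixed_iff: "twc q (-1) c = c \<longleftrightarrow> (c::'c) ^ q = c"
  using twc_power_cancel[of "-1" c] twc_eqI[of "-1" c c] by auto

lemma av_nonneg: "0 \<le> av x"
  and av_eq_0_iff [simp]: "av x = 0 \<longleftrightarrow> x = 0"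
  and av_mult: "av (x * y) = av x * av y"
  and av_add: "av (x + y) \<le> max (av x) (av y)"
  using nonarch unfolding nonarch_abs_def by blast+

lemma av_0 [simp]: "av 0 = 0"
  by simp

lemma av_1 [simp]: "av 1 = 1"
proof -
  have "av 1 * av 1 = av 1 * 1" using av_mult[of 1 1] by simp
  then show ?thesis by simp
qed

lemma av_power: "av (x ^ m) = av x ^ m"
  by (induction m) (simp_all add: av_mult)

lemma av_twc: "m \<le> 0 \<Longrightarrow> av (twc q m x) ^ (q ^ nat (- m)) = av x"
  by (simp add: twc_power_cancel flip: av_power)

lemma av_eq_1_if_in_Fq:
  assumes "x ^ q = x" and "x \<noteq> 0"
  shows "av x = 1"
proof -
  have "x * x ^ (q - 1) = x * 1"
    using assms(1) q_ge_2 by (simp flip: power_Suc)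
  then have "x ^ (q - 1) = 1" using assms(2) by simp
  then have "av x ^ (q - 1) = 1" using av_power[of x "q - 1"] by simp
  then show ?thesis
    using power_eq_iff_eq_base[of "q - 1" "av x" 1] q_ge_2 av_nonneg[of x] by simp
qed

lemma twc_tmul:
  "m \<le> 0 \<Longrightarrow> twc q m (tmul s f g \<alpha>) = tmul s (ttw q m f) (ttw q m (g :: _ \<Rightarrow> 'c)) \<alpha>"
  by (simp add: ttw_def tmul_eq twc_sum twc_mult)

lemma ttw_tmul:
  "m \<le> 0 \<Longrightarrow> ttw q m (tmul s f g) = tmul s (ttw q m f) (ttw q m (g :: _ \<Rightarrow> 'c))"
  by (simp add: ttw_def fun_eq_iff twc_tmul[unfolded ttw_def])

lemma supported_ttw: "m \<le> 0 \<Longrightarrow> supported s f \<Longrightarrow> supported s (ttw q m (f :: _ \<Rightarrow> 'c))"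
  by (simp add: ttw_def supported_def)

lemma ttw_tone [simp]: "m \<le> 0 \<Longrightarrow> ttw q m tone = (tone :: _ \<Rightarrow> 'c)"
  and ttw_tzero [simp]: "m \<le> 0 \<Longrightarrow> ttw q m tzero = (tzero :: _ \<Rightarrow> 'c)"
  by (simp_all add: ttw_def tone_def tzero_def fun_eq_iff)

lemma ttw_eq_tzero_iff [simp]: "m \<le> 0 \<Longrightarrow> ttw q m f = tzero \<longleftrightarrow> f = (tzero :: _ \<Rightarrow> 'c)"
  by (simp add: ttw_def tzero_def fun_eq_iff)

lemma ztw_zmul: "m \<le> 0 \<Longrightarrow> ztw q m (zmul s F G) = zmul s (ztw q m F) (ztw q m (G :: 'c zser))"
  by (simp add: ztw_def zmul_def fun_eq_iff ttw_def twc_sum twc_tmul[unfolded ttw_def])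

lemma ztw_zzero [simp]: "m \<le> 0 \<Longrightarrow> ztw q m zzero = (zzero :: 'c zser)"
  and ztw_zone [simp]: "m \<le> 0 \<Longrightarrow> ztw q m zone = (zone :: 'c zser)"
  by (simp_all add: ztw_def zzero_def zone_def fun_eq_iff)

lemma ztw_sum: "m \<le> 0 \<Longrightarrow> ztw q m (\<lambda>n \<alpha>. \<Sum>i\<in>I. F i n \<alpha>) = (\<lambda>n \<alpha>. \<Sum>i\<in>I. ztw q m (F i :: 'c zser) n \<alpha>)"
  by (simp add: ztw_def ttw_def twc_sum)

lemma zsupported_ztw: "m \<le> 0 \<Longrightarrow> zsupported s F \<Longrightarrow> zsupported s (ztw q m (F :: 'c zser))"
  by (simp add: zsupported_def ztw_def supported_ttw)

lemma vtw_vecmat: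
  "m \<le> 0 \<Longrightarrow> vtw q m (vecmat s r g M) = vecmat s r (vtw q m g) (mtw q m (M :: nat \<Rightarrow> nat \<Rightarrow> 'c zser))"
  by (rule ext) (simp add: vtw_def mtw_def vecmat_def ztw_sum ztw_zmul)

lemma mtw_matmul:
  "m \<le> 0 \<Longrightarrow> mtw q m (matmul s r L M) = matmul s r (mtw q m L) (mtw q m (M :: nat \<Rightarrow> nat \<Rightarrow> 'c zser))"
  by (intro ext) (simp add: mtw_def matmul_def ztw_sum ztw_zmul)

lemma mtw_idmat: "m \<le> 0 \<Longrightarrow> mtw q m (idmat r) = (idmat r :: nat \<Rightarrow> nat \<Rightarrow> 'c zser)"
  by (auto simp: mtw_def idmat_def fun_eq_iff)

end

lemma CHAR_eq_prime:
  assumes "prime p" and "of_nat p = (0::'a::idom)"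
  shows "CHAR('a) = p"
proof -
  have "CHAR('a) dvd p" using assms(2) of_nat_eq_0_iff_char_dvd by blast
  then show ?thesis using assms(1) CHAR_not_1' by (auto simp: prime_nat_iff)
qed

lemma is_Cinf_valued_frobenius_field:
  assumes "is_Cinf q av \<theta>"
  shows "valued_frobenius_field q (av :: 'c::field \<Rightarrow> real)"
proof
  obtain p k where p: "prime p" "k \<ge> 1" "q = p ^ k" "of_nat p = (0::'c)"
    using assms by (auto simp: is_Cinf_def)
  have "CHAR('c) = p" using CHAR_eq_prime p by blast
  show "(x + y) ^ q = x ^ q + y ^ q" for x y :: 'c
    using freshmans_dream' p \<open>CHAR('c) = p\<close> by blast
  have "p \<ge> 2" using p(1) prime_ge_2_nat by blast
  moreover have "p \<le> q" using p(2,3) \<open>p \<ge> 2\<close> by (simp add: self_le_power)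
  ultimately show "2 \<le> q" by simp
  show "\<exists>y. y ^ q = c" for c :: 'c
  proof -
    have "degree (monom 1 q + [:- c:]) = q"
      using \<open>2 \<le> q\<close> by (subst degree_add_eq_left) (simp_all add: degree_monom_eq)
    moreover have "alg_closed_field TYPE('c)" using assms by (simp add: is_Cinf_def)
    ultimately obtain y where "poly (monom 1 q + [:- c:]) y = 0"
      using \<open>2 \<le> q\<close> unfolding alg_closed_field_def by (metis one_le_numeral order_trans)
    then show ?thesis by (auto simp: poly_monom)
  qed
  show "nonarch_abs av" using assms by (simp add: is_Cinf_def)
qed

section \<open>Norm estimates in \<open>\<bbbT>\<^sub>s\<close> and \<open>\<bbbT>\<^sub>s{z/\<theta>}\<close>\<close>

lemma eventually_convolution_small:
  fixes a b :: "nat \<Rightarrow> real"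
  assumes a: "a \<longlonglongrightarrow> 0" and b: "b \<longlonglongrightarrow> 0" and e: "0 < e"
  shows "\<forall>\<^sub>F n in sequentially. \<forall>k\<le>n. \<bar>a k * b (n - k)\<bar> < e"
proof -
  obtain A where A: "0 < A" "\<And>k. \<bar>a k\<bar> \<le> A"
    using BseqE[OF convergent_imp_Bseq[OF convergentI[OF a]]] by (metis real_norm_def)
  obtain B where B: "0 < B" "\<And>k. \<bar>b k\<bar> \<le> B"
    using BseqE[OF convergent_imp_Bseq[OF convergentI[OF b]]] by (metis real_norm_def)
  define \<delta> where "\<delta> = e / (A + B)"
  have \<delta>: "0 < \<delta>" "\<delta> * B \<le> e" "A * \<delta> \<le> e"
    using A B e by (simp_all add: \<delta>_def field_simps)
  obtain N1 where N1: "\<And>k. N1 \<le> k \<Longrightarrow> \<bar>a k\<bar> < \<delta>"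
    using LIMSEQ_D[OF a \<delta>(1)] by auto
  obtain N2 where N2: "\<And>k. N2 \<le> k \<Longrightarrow> \<bar>b k\<bar> < \<delta>"
    using LIMSEQ_D[OF b \<delta>(1)] by auto
  have "\<bar>a k * b (n - k)\<bar> < e" if "N1 + N2 \<le> n" "k \<le> n" for n k
  proof (cases "N1 \<le> k")
    case True
    have "\<bar>a k\<bar> * \<bar>b (n - k)\<bar> \<le> \<bar>a k\<bar> * B" using B(2) by (simp add: mult_left_mono)
    also have "\<dots> < \<delta> * B" using N1[OF True] B(1) by simp
    finally show ?thesis using \<delta>(2) by (simp add: abs_mult)
  next
    case False
    then have "N2 \<le> n - k" using that by linarith
    have "\<bar>a k\<bar> * \<bar>b (n - k)\<bar> \<le> A * \<bar>b (n - k)\<bar>" using A(2) by (simp add: mult_right_mono)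
    also have "\<dots> < A * \<delta>" using N2[OF \<open>N2 \<le> n - k\<close>] A(1) by simp
    finally show ?thesis using \<delta>(3) by (simp add: abs_mult)
  qed
  then show ?thesis unfolding eventually_sequentially by blast
qed

context valued_frobenius_field
begin

lemma av_sum_le: "(\<And>i. i \<in> I \<Longrightarrow> av (f i) \<le> M) \<Longrightarrow> 0 \<le> M \<Longrightarrow> av (\<Sum>i\<in>I. f i :: 'c) \<le> M"
proof (induction I rule: infinite_finite_induct)
  case (insert x F)
  then have "max (av (f x)) (av (sum f F)) \<le> M" by simp
  then show ?case using insert.hyps order_trans[OF av_add[of "f x" "sum f F"]] by simp
qed simp_all

lemma av_sum_less: "(\<And>i. i \<in> I \<Longrightarrow> av (f i) < e) \<Longrightarrow> 0 < e \<Longrightarrow> av (\<Sum>i\<in>I. f i :: 'c) < e"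
proof (induction I rule: infinite_finite_induct)
  case (insert x F)
  then have "max (av (f x)) (av (sum f F)) < e" by simp
  then show ?case using insert.hyps le_less_trans[OF av_add[of "f x" "sum f F"]] by simp
qed simp_all

lemma supported_Tate: "f \<in> Tate s av \<Longrightarrow> supported s f"
  by (simp add: Tate_def supported_def)

lemma tzero_in_Tate: "(tzero :: _ \<Rightarrow> 'c) \<in> Tate s av"
  by (simp add: Tate_def tzero_def)

lemma bdd_above_Tate: "f \<in> Tate s av \<Longrightarrow> bdd_above (range (\<lambda>\<alpha>. av (f \<alpha>)))"
proof -
  assume f: "f \<in> Tate s av"
  define S where "S = {\<alpha>. 1 \<le> av (f \<alpha>)}"
  have "finite S" using f by (simp add: Tate_def S_def)
  have "av (f \<alpha>) \<le> 1 + (\<Sum>\<beta>\<in>S. av (f \<beta>))" for \<alpha>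
  proof (cases "\<alpha> \<in> S")
    case True
    then have "av (f \<alpha>) \<le> (\<Sum>\<beta>\<in>S. av (f \<beta>))"
      using \<open>finite S\<close> av_nonneg by (intro member_le_sum) auto
    then show ?thesis by simp
  next
    case False
    moreover have "0 \<le> (\<Sum>\<beta>\<in>S. av (f \<beta>))" using av_nonneg by (intro sum_nonneg) auto
    ultimately show ?thesis by (simp add: S_def)
  qed
  then show ?thesis by (intro bdd_aboveI2)
qed

lemma gnorm_ge: "f \<in> Tate s av \<Longrightarrow> av (f \<alpha>) \<le> gnorm av f"
  unfolding gnorm_def by (rule cSup_upper) (auto intro: bdd_above_Tate)

lemma gnorm_le: "(\<And>\<alpha>. av (f \<alpha>) \<le> M) \<Longrightarrow> gnorm av f \<le> M"
  unfolding gnorm_def by (rule cSup_least) auto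

lemma gnorm_nonneg: "f \<in> Tate s av \<Longrightarrow> 0 \<le> gnorm av f"
  using gnorm_ge av_nonneg order_trans by blast

lemma gnorm_tzero [simp]: "gnorm av (tzero :: _ \<Rightarrow> 'c) = 0"
  by (simp add: gnorm_def tzero_def)

lemma av_tmul_le:
  assumes "f \<in> Tate s av" and "g \<in> Tate s av"
  shows "av (tmul s f g \<alpha>) \<le> gnorm av f * gnorm av g"
  unfolding tmul_eq
proof (rule av_sum_le)
  fix \<beta>
  show "av (f \<beta> * g (\<lambda>i. \<alpha> i - \<beta> i)) \<le> gnorm av f * gnorm av g"
    unfolding av_mult using assms
    by (intro mult_mono) (simp_all add: gnorm_ge gnorm_nonneg av_nonneg)
qed (simp add: gnorm_nonneg[OF assms(1)] gnorm_nonneg[OF assms(2)])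

lemma large_tmul_coefficient:
  assumes "0 < e" and "e \<le> av (tmul s f g \<alpha>)"
  obtains \<beta> where "\<beta> \<in> MI_below s \<alpha>" and "e \<le> av (f \<beta>) * av (g (\<lambda>i. \<alpha> i - \<beta> i))"
  using av_sum_less[of "MI_below s \<alpha>" "\<lambda>\<beta>. f \<beta> * g (\<lambda>i. \<alpha> i - \<beta> i)" e] assms
  by (force simp: tmul_eq av_mult)

lemma tmul_in_Tate:
  assumes f: "f \<in> Tate s av" and g: "g \<in> Tate s av"
  shows "tmul s f g \<in> Tate s av"
proof -
  have "finite {\<alpha>. e \<le> av (tmul s f g \<alpha>)}" if e: "0 < e" for e
  proof (cases "gnorm av f * gnorm av g < e")
    case True
    then have "{\<alpha>. e \<le> av (tmul s f g \<alpha>)} = {}"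
      by (auto dest!: order_trans[OF _ av_tmul_le[OF f g]])
    then show ?thesis by simp
  next
    case False
    then have Mf: "0 < gnorm av f" and Mg: "0 < gnorm av g"
      using e gnorm_nonneg[OF f] gnorm_nonneg[OF g] by (auto simp: not_less order.order_iff_strict)
    define Sf where "Sf = {\<beta>. e / gnorm av g \<le> av (f \<beta>)}"
    define Sg where "Sg = {\<gamma>. e / gnorm av f \<le> av (g \<gamma>)}"
    have "finite Sf" "finite Sg" using f g e Mf Mg by (simp_all add: Tate_def Sf_def Sg_def)
    have "{\<alpha>. e \<le> av (tmul s f g \<alpha>)} \<subseteq> (\<lambda>(\<beta>, \<gamma>) i. \<beta> i + \<gamma> i) ` (Sf \<times> Sg)"
    proof
      fix \<alpha> assume "\<alpha> \<in> {\<alpha>. e \<le> av (tmul s f g \<alpha>)}"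
      then have "e \<le> av (tmul s f g \<alpha>)" by simp
      then obtain \<beta> where \<beta>: "\<beta> \<in> MI_below s \<alpha>" and large: "e \<le> av (f \<beta>) * av (g (\<lambda>i. \<alpha> i - \<beta> i))"
        using large_tmul_coefficient[OF e] by blast
      let ?\<gamma> = "\<lambda>i. \<alpha> i - \<beta> i"
      have "e \<le> av (f \<beta>) * gnorm av g"
        using order_trans[OF large mult_left_mono[OF gnorm_ge[OF g] av_nonneg]] .
      then have "\<beta> \<in> Sf" using Mg by (simp add: Sf_def pos_divide_le_eq)
      moreover have "e \<le> gnorm av f * av (g ?\<gamma>)"
        using order_trans[OF large mult_right_mono[OF gnorm_ge[OF f] av_nonneg]] .
      then have "?\<gamma> \<in> Sg" using Mf by (simp add: Sg_def pos_divide_le_eq mult.commute)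
      moreover have "\<alpha> = (\<lambda>i. \<beta> i + ?\<gamma> i)" using \<beta> by (auto simp: MI_below_def fun_eq_iff)
      ultimately show "\<alpha> \<in> (\<lambda>(\<beta>, \<gamma>) i. \<beta> i + \<gamma> i) ` (Sf \<times> Sg)"
        by (intro image_eqI[where x = "(\<beta>, ?\<gamma>)"]) auto
    qed
    moreover have "finite ((\<lambda>(\<beta>, \<gamma>) i. \<beta> i + \<gamma> i) ` (Sf \<times> Sg))"
      using \<open>finite Sf\<close> \<open>finite Sg\<close> by simp
    ultimately show ?thesis by (rule finite_subset)
  qed
  moreover have "supported s (tmul s f g)" using supported_tmul supported_Tate g by blast
  ultimately show ?thesis by (simp add: Tate_def supported_def)
qed

lemma sum_in_Tate:
  assumes "\<And>i. i \<in> I \<Longrightarrow> f i \<in> Tate s av"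
  shows "(\<lambda>\<alpha>. \<Sum>i\<in>I. f i \<alpha>) \<in> Tate s av"
proof (cases "finite I")
  case True
  have "finite {\<alpha>. e \<le> av (\<Sum>i\<in>I. f i \<alpha>)}" if e: "0 < e" for e
  proof (rule finite_subset)
    show "{\<alpha>. e \<le> av (\<Sum>i\<in>I. f i \<alpha>)} \<subseteq> (\<Union>i\<in>I. {\<alpha>. e \<le> av (f i \<alpha>)})"
    proof (rule subsetI, rule ccontr)
      fix \<alpha> assume "\<alpha> \<in> {\<alpha>. e \<le> av (\<Sum>i\<in>I. f i \<alpha>)}" "\<alpha> \<notin> (\<Union>i\<in>I. {\<alpha>. e \<le> av (f i \<alpha>)})"
      then show False using av_sum_less[of I "\<lambda>i. f i \<alpha>" e] e by (auto simp: not_le)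
    qed
    show "finite (\<Union>i\<in>I. {\<alpha>. e \<le> av (f i \<alpha>)})"
      using True assms e by (simp add: Tate_def)
  qed
  moreover have "supported s (\<lambda>\<alpha>. \<Sum>i\<in>I. f i \<alpha>)"
    using assms supported_Tate by (blast intro: supported_sum)
  ultimately show ?thesis by (simp add: Tate_def supported_def)
qed (simp add: tzero_in_Tate[unfolded tzero_def])

lemma gnorm_sum_le:
  assumes "\<And>i. i \<in> I \<Longrightarrow> f i \<in> Tate s av" and "finite I"
  shows "gnorm av (\<lambda>\<alpha>. \<Sum>i\<in>I. f i \<alpha>) \<le> (\<Sum>i\<in>I. gnorm av (f i))"
proof (intro gnorm_le av_sum_le)
  show "av (f i \<alpha>) \<le> (\<Sum>i\<in>I. gnorm av (f i))" if "i \<in> I" for i \<alpha>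
  proof -
    have "av (f i \<alpha>) \<le> gnorm av (f i)" using gnorm_ge[OF assms(1)[OF that]] .
    also have "\<dots> \<le> (\<Sum>i\<in>I. gnorm av (f i))"
      using that assms gnorm_nonneg by (intro member_le_sum) auto
    finally show ?thesis .
  qed
  show "0 \<le> (\<Sum>i\<in>I. gnorm av (f i))"
    by (intro sum_nonneg) (use assms gnorm_nonneg in blast)
qed

lemma ttw_in_Tate:
  assumes m: "m \<le> 0" and f: "f \<in> Tate s av"
  shows "ttw q m f \<in> Tate s av"
proof -
  have "finite {\<alpha>. e \<le> av (ttw q m f \<alpha>)}" if "0 < e" for e
  proof (rule finite_subset)
    show "{\<alpha>. e \<le> av (ttw q m f \<alpha>)} \<subseteq> {\<alpha>. e ^ (q ^ nat (- m)) \<le> av (f \<alpha>)}"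
      using that av_twc[OF m]
      by (auto simp: ttw_def intro: power_mono[where n = "q ^ nat (- m)", THEN order_trans])
    show "finite {\<alpha>. e ^ (q ^ nat (- m)) \<le> av (f \<alpha>)}"
      using f that by (simp add: Tate_def)
  qed
  then show ?thesis using f m by (simp add: Tate_def ttw_def)
qed

lemma Zser_Tate: "F \<in> Zser q s av \<Longrightarrow> F n \<in> Tate s av"
  and Zser_tendsto: "F \<in> Zser q s av \<Longrightarrow> (\<lambda>n. real q ^ n * gnorm av (F n)) \<longlonglongrightarrow> 0"
  by (simp_all add: Zser_def)

lemma zsupported_Zser: "F \<in> Zser q s av \<Longrightarrow> zsupported s F"
  by (simp add: zsupported_def Zser_Tate supported_Tate)

lemma zzero_in_Zser: "(zzero :: 'c zser) \<in> Zser q s av"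
  by (simp add: Zser_def zzero_def tzero_in_Tate)

lemma weighted_gnorm_zmul_le:
  assumes F: "\<And>k. F k \<in> Tate s av" and G: "\<And>k. G k \<in> Tate s av" and "0 \<le> e"
    and factors: "\<And>k. k \<le> n \<Longrightarrow> (real q ^ k * gnorm av (F k)) * (real q ^ (n - k) * gnorm av (G (n - k))) \<le> e"
  shows "real q ^ n * gnorm av (zmul s F G n) \<le> e"
proof -
  have qn: "0 < real q ^ n" using q_ge_2 by simp
  have "gnorm av (F k) * gnorm av (G (n - k)) \<le> e / real q ^ n" if "k \<le> n" for k
  proof -
    have "real q ^ n = real q ^ k * real q ^ (n - k)" using that by (simp flip: power_add)
    then show ?thesis using factors[OF that] qn by (simp add: pos_le_divide_eq mult_ac)
  qed
  then have "av (zmul s F G n \<alpha>) \<le> e / real q ^ n" for \<alpha>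
    unfolding zmul_eq using \<open>0 \<le> e\<close> qn
    by (intro av_sum_le) (auto intro: order_trans[OF av_tmul_le[OF F G]])
  then have "gnorm av (zmul s F G n) \<le> e / real q ^ n" by (rule gnorm_le)
  then show ?thesis using qn by (simp add: pos_le_divide_eq mult.commute)
qed

lemma zmul_in_Zser:
  assumes F: "F \<in> Zser q s av" and G: "G \<in> Zser q s av"
  shows "zmul s F G \<in> Zser q s av"
proof -
  define a where "a k = real q ^ k * gnorm av (F k)" for k
  define b where "b k = real q ^ k * gnorm av (G k)" for k
  have T: "zmul s F G n \<in> Tate s av" for n
    unfolding zmul_def using Zser_Tate[OF F] Zser_Tate[OF G] by (intro sum_in_Tate tmul_in_Tate)
  have "(\<lambda>n. real q ^ n * gnorm av (zmul s F G n)) \<longlonglongrightarrow> 0"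
  proof (rule order_tendstoI)
    fix e :: real assume "e < 0"
    have "0 \<le> real q ^ n * gnorm av (zmul s F G n)" for n using gnorm_nonneg[OF T] by simp
    then show "\<forall>\<^sub>F n in sequentially. e < real q ^ n * gnorm av (zmul s F G n)"
      by (intro always_eventually allI less_le_trans[OF \<open>e < 0\<close>])
  next
    fix e :: real assume "0 < e"
    have "a \<longlonglongrightarrow> 0" "b \<longlonglongrightarrow> 0"
      unfolding a_def b_def by (rule Zser_tendsto[OF F], rule Zser_tendsto[OF G])
    then have "\<forall>\<^sub>F n in sequentially. \<forall>k\<le>n. \<bar>a k * b (n - k)\<bar> < e / 2"
      using \<open>0 < e\<close> by (intro eventually_convolution_small) simp_all
    then show "\<forall>\<^sub>F n in sequentially. real q ^ n * gnorm av (zmul s F G n) < e"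
    proof (rule eventually_mono)
      fix n assume small: "\<forall>k\<le>n. \<bar>a k * b (n - k)\<bar> < e / 2"
      have "real q ^ n * gnorm av (zmul s F G n) \<le> e / 2"
      proof (rule weighted_gnorm_zmul_le[OF Zser_Tate[OF F] Zser_Tate[OF G]])
        show "(real q ^ k * gnorm av (F k)) * (real q ^ (n - k) * gnorm av (G (n - k))) \<le> e / 2"
          if "k \<le> n" for k
          using small that by (fastforce simp: a_def b_def)
      qed (use \<open>0 < e\<close> in simp)
      then show "real q ^ n * gnorm av (zmul s F G n) < e" using \<open>0 < e\<close> by simp
    qed
  qed
  then show ?thesis using T by (simp add: Zser_def)
qed

lemma sum_in_Zser:
  assumes "\<And>i. i \<in> I \<Longrightarrow> F i \<in> Zser q s av" and "finite I"
  shows "(\<lambda>n \<alpha>. \<Sum>i\<in>I. F i n \<alpha>) \<in> Zser q s av"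
proof -
  have T: "(\<lambda>\<alpha>. \<Sum>i\<in>I. F i n \<alpha>) \<in> Tate s av" for n
    using assms by (intro sum_in_Tate Zser_Tate)
  have upper: "real q ^ n * gnorm av (\<lambda>\<alpha>. \<Sum>i\<in>I. F i n \<alpha>) \<le> (\<Sum>i\<in>I. real q ^ n * gnorm av (F i n))" for n
  proof -
    have "gnorm av (\<lambda>\<alpha>. \<Sum>i\<in>I. F i n \<alpha>) \<le> (\<Sum>i\<in>I. gnorm av (F i n))"
      using assms by (intro gnorm_sum_le Zser_Tate) auto
    then show ?thesis by (simp add: mult_left_mono flip: sum_distrib_left)
  qed
  have lower: "0 \<le> real q ^ n * gnorm av (\<lambda>\<alpha>. \<Sum>i\<in>I. F i n \<alpha>)" for n
    using gnorm_nonneg[OF T] by simp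
  have "(\<lambda>n. \<Sum>i\<in>I. real q ^ n * gnorm av (F i n)) \<longlonglongrightarrow> 0"
    using assms by (intro tendsto_null_sum Zser_tendsto)
  then have "(\<lambda>n. real q ^ n * gnorm av (\<lambda>\<alpha>. \<Sum>i\<in>I. F i n \<alpha>)) \<longlonglongrightarrow> 0"
    by (rule tendsto_sandwich[OF always_eventually[OF allI[OF lower]] always_eventually[OF allI[OF upper]]
          tendsto_const])
  then show ?thesis using T by (simp add: Zser_def)
qed

lemma Fqtz_in_Tate:
  assumes "F \<in> Fqtz q s"
  shows "F n \<in> Tate s av"
proof -
  have "finite {\<alpha>. e \<le> av (F n \<alpha>)}" if "0 < e" for e
  proof (rule finite_subset)
    show "{\<alpha>. e \<le> av (F n \<alpha>)} \<subseteq> {\<alpha>. F n \<alpha> \<noteq> 0}" using that by auto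
    show "finite {\<alpha>. F n \<alpha> \<noteq> 0}" using assms by (simp add: Fqtz_def)
  qed
  then show ?thesis using assms by (simp add: Fqtz_def Tate_def)
qed

lemma Fqtz_subset_Zser: "Fqtz q s \<subseteq> Zser q s av"
proof
  fix F :: "'c zser" assume F: "F \<in> Fqtz q s"
  then obtain N where "\<And>n. F n \<noteq> tzero \<Longrightarrow> n < N"
    by (auto simp: Fqtz_def finite_nat_set_iff_bounded)
  then have vanish: "F n = tzero" if "N \<le> n" for n using that not_le by blast
  have "\<forall>\<^sub>F n in sequentially. real q ^ n * gnorm av (F n) = 0"
    by (rule eventually_sequentiallyI[of N]) (simp add: vanish)
  then have "(\<lambda>n. real q ^ n * gnorm av (F n)) \<longlonglongrightarrow> 0" by (rule tendsto_eventually)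
  then show "F \<in> Zser q s av" using Fqtz_in_Tate[OF F] by (simp add: Zser_def)
qed

lemma Zser_Fq_coeffs_in_Fqtz:
  assumes F: "F \<in> Zser q s av" and Fq: "\<And>n \<alpha>. F n \<alpha> ^ q = F n \<alpha>"
  shows "F \<in> Fqtz q s"
proof -
  have av1: "F n \<alpha> \<noteq> 0 \<Longrightarrow> av (F n \<alpha>) = 1" for n \<alpha> using av_eq_1_if_in_Fq Fq by blast
  have "finite {\<alpha>. F n \<alpha> \<noteq> 0}" for n
  proof (rule finite_subset)
    show "{\<alpha>. F n \<alpha> \<noteq> 0} \<subseteq> {\<alpha>. 1 \<le> av (F n \<alpha>)}" using av1 by auto
    show "finite {\<alpha>. 1 \<le> av (F n \<alpha>)}" using Zser_Tate[OF F, of n] by (simp add: Tate_def)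
  qed
  moreover obtain N where N: "\<And>n. N \<le> n \<Longrightarrow> real q ^ n * gnorm av (F n) < 1"
    using order_tendstoD(2)[OF Zser_tendsto[OF F], of 1] by (auto simp: eventually_sequentially)
  have "n < N" if nonzero: "F n \<noteq> tzero" for n
  proof (rule ccontr)
    assume "\<not> n < N"
    obtain \<alpha> where "F n \<alpha> \<noteq> 0" using nonzero by (auto simp: tzero_def fun_eq_iff)
    then have "1 \<le> gnorm av (F n)" using gnorm_ge[OF Zser_Tate[OF F], of n \<alpha>] av1 by simp
    moreover have "1 \<le> real q ^ n" using q_ge_2 by simp
    ultimately have "1 \<le> real q ^ n * gnorm av (F n)" using mult_mono[of 1 _ 1] by fastforce
    moreover have "real q ^ n * gnorm av (F n) < 1" using N \<open>\<not> n < N\<close> by simp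
    ultimately show False by simp
  qed
  then have "{n. F n \<noteq> tzero} \<subseteq> {..<N}" by auto
  then have "finite {n. F n \<noteq> tzero}" by (rule finite_subset) simp
  ultimately show ?thesis using Fq Zser_Tate[OF F] by (simp add: Fqtz_def in_Fq_def Tate_def)
qed

lemma zzero_in_Fqtz: "(zzero :: 'c zser) \<in> Fqtz q s"
  and zone_in_Fqtz: "(zone :: 'c zser) \<in> Fqtz q s"
proof -
  have "finite {\<alpha>. zone n \<alpha> \<noteq> (0::'c)}" for n
    by (rule finite_subset[of _ "{\<lambda>i. 0}"]) (auto simp: zone_def tone_def tzero_def)
  moreover have "finite {n. zone n \<noteq> (tzero :: _ \<Rightarrow> 'c)}"
    by (rule finite_subset[of _ "{0}"]) (auto simp: zone_def)
  ultimately show "(zone :: 'c zser) \<in> Fqtz q s"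
    using q_ge_2 by (auto simp: Fqtz_def zone_def tone_def tzero_def MI_def in_Fq_def)
  show "(zzero :: 'c zser) \<in> Fqtz q s"
    using q_ge_2 by (simp add: Fqtz_def zzero_def tzero_def in_Fq_def)
qed

lemma ztw_Fqtz: "F \<in> Fqtz q s \<Longrightarrow> ztw q (-1) F = (F :: 'c zser)"
  by (simp add: Fqtz_def ztw_def ttw_def in_Fq_def fun_eq_iff twc_minus_one_fixed_iff)

lemma zsupported_rowvec: "g \<in> rowvecs r R \<Longrightarrow> R \<subseteq> Zser q s av \<Longrightarrow> zsupported s (g j)"
  by (cases "j < r") (auto simp: rowvecs_def zsupported_Zser zsupported_zzero)

lemma vecmat_in_rowvecs_Zser:
  assumes "g \<in> rowvecs r (Zser q s av)" and "M \<in> mats r (Zser q s av)"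
  shows "vecmat s r g M \<in> rowvecs r (Zser q s av)"
  using assms unfolding rowvecs_def mats_def vecmat_def by (auto intro!: sum_in_Zser zmul_in_Zser)

end

section \<open>The module \<open>V\<^sub>\<phi>\<close>\<close>

locale drinfeld_module = valued_frobenius_field q av for q and av :: "'c::field \<Rightarrow> real" +
  fixes \<theta> :: 'c and s r :: nat and A :: "nat \<Rightarrow> (nat \<Rightarrow> nat) \<Rightarrow> 'c"
  assumes r_pos: "1 \<le> r"
    and A_unit: "tunit s av (A r)"
begin

abbreviation "\<Phi> \<equiv> PhiMat q s av \<theta> r A"
abbreviation "V \<equiv> Vphi q s av \<theta> r A"
abbreviation "Ar \<equiv> ttw q (- int r) (A r)"
abbreviation "Ar_inv \<equiv> tinv s av Ar"

lemma Ar_inv: "Ar_inv \<in> Tate s av" "tmul s Ar Ar_inv = tone"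
proof -
  obtain g where g: "g \<in> Tate s av" "tmul s (A r) g = tone" and "A r \<in> Tate s av"
    using A_unit by (auto simp: tunit_def)
  then have "ttw q (- int r) g \<in> Tate s av \<and> tmul s Ar (ttw q (- int r) g) = tone"
    by (simp add: ttw_in_Tate flip: ttw_tmul)
  then have "Ar_inv \<in> Tate s av \<and> tmul s Ar Ar_inv = tone"
    unfolding tinv_def by (rule someI[where P = "\<lambda>g. g \<in> Tate s av \<and> tmul s Ar g = tone"])
  then show "Ar_inv \<in> Tate s av" "tmul s Ar Ar_inv = tone" by simp_all
qed

lemma tmul_Ar_inv_neq_tzero:
  assumes "supported s x" and "x \<noteq> tzero"
  shows "tmul s x Ar_inv \<noteq> tzero"
proof
  assume zero: "tmul s x Ar_inv = tzero"
  have "Ar \<in> Tate s av" using A_unit by (simp add: tunit_def ttw_in_Tate)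
  then have "tmul s Ar_inv Ar = tone"
    using Ar_inv tmul_commute supported_Tate by metis
  then have "x = tmul s (tmul s x Ar_inv) Ar"
    using tmul_tone_right[OF assms(1)] by (simp add: tmul_assoc)
  then show False using zero assms(2) by simp
qed

lemma Phi_upper: "k < r - 1 \<Longrightarrow> j < r \<Longrightarrow> \<Phi> k j = (if j = k + 1 then zone else zzero)"
  by (auto simp: PhiMat_def Let_def)

lemma Phi_last_0:
  "\<Phi> (r - 1) 0 = (\<lambda>n. if n = 0 then tmul s (tconst (- \<theta>)) Ar_inv else if n = 1 then Ar_inv else tzero)"
  using r_pos by (auto simp: PhiMat_def Let_def)

lemma Phi_last_const: "0 < j \<Longrightarrow> j < r \<Longrightarrow> 0 < n \<Longrightarrow> \<Phi> (r - 1) j n = tzero"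
  using r_pos by (auto simp: PhiMat_def Let_def)

lemma zsupported_Phi: "zsupported s (\<Phi> k j)"
  using supported_Tate[OF Ar_inv(1)]
  by (auto simp: PhiMat_def Let_def zsupported_def zone_def zzero_def supported_tzero supported_tone
      intro: supported_tmul)

lemma zmul_Phi_last_0_Suc:
  "zmul s X (\<Phi> (r - 1) 0) (Suc n) \<alpha>
     = tmul s (X n) Ar_inv \<alpha> + tmul s (X (Suc n)) (tmul s (tconst (- \<theta>)) Ar_inv) \<alpha>"
proof -
  have "tmul s (X k) (\<Phi> (r - 1) 0 (Suc n - k)) \<alpha>
      = (if k = n then tmul s (X n) Ar_inv \<alpha> else 0)
        + (if k = Suc n then tmul s (X (Suc n)) (tmul s (tconst (- \<theta>)) Ar_inv) \<alpha> else 0)"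
    if "k \<in> {..Suc n}" for k
    using that unfolding Phi_last_0 by (auto simp: tzero_def)
  then show ?thesis unfolding zmul_eq by (simp add: sum.distrib)
qed

lemma zmul_Phi_last_const:
  assumes "0 < j" and "j < r"
  shows "zmul s X (\<Phi> (r - 1) j) n \<alpha> = tmul s (X n) (\<Phi> (r - 1) j 0) \<alpha>"
proof -
  have "tmul s (X k) (\<Phi> (r - 1) j (n - k)) \<alpha> = (if k = n then tmul s (X n) (\<Phi> (r - 1) j 0) \<alpha> else 0)"
    if "k \<in> {..n}" for k
    using that assms Phi_last_const[of j "n - k"] by (auto simp: tzero_def)
  then show ?thesis unfolding zmul_eq by simp
qed

lemma vecmat_Phi:
  assumes "j < r"
  shows "vecmat s r G \<Phi> j n \<alpha>
           = (\<Sum>k<r - 1. zmul s (G k) (\<Phi> k j) n \<alpha>) + zmul s (G (r - 1)) (\<Phi> (r - 1) j) n \<alpha>"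
proof -
  have "vecmat s r G \<Phi> j n \<alpha> = (\<Sum>k<Suc (r - 1). zmul s (G k) (\<Phi> k j) n \<alpha>)"
    using assms r_pos by (simp add: vecmat_def)
  then show ?thesis by (simp only: sum.lessThan_Suc)
qed

lemma V_row_0:
  assumes "g \<in> V"
  shows "g 0 n \<alpha> = zmul s (vtw q (-1) g (r - 1)) (\<Phi> (r - 1) 0) n \<alpha>"
proof -
  have "g 0 n \<alpha> = vecmat s r (vtw q (-1) g) \<Phi> 0 n \<alpha>" using assms by (simp add: Vphi_def)
  also have "\<dots> = zmul s (vtw q (-1) g (r - 1)) (\<Phi> (r - 1) 0) n \<alpha>"
    using r_pos by (simp add: vecmat_Phi Phi_upper zzero_def tzero_def)
  finally show ?thesis .
qed

lemma V_row_Suc: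
  assumes "g \<in> V" and "Suc j < r"
  shows "g (Suc j) n \<alpha> = ttw q (-1) (g j n) \<alpha> + zmul s (vtw q (-1) g (r - 1)) (\<Phi> (r - 1) (Suc j)) n \<alpha>"
proof -
  have g: "g \<in> rowvecs r (Zser q s av)" and fixed: "vecmat s r (vtw q (-1) g) \<Phi> = g"
    using assms(1) by (simp_all add: Vphi_def)
  have "zsupported s (vtw q (-1) g j)"
    unfolding vtw_def by (intro zsupported_ztw zsupported_rowvec[OF g]) simp_all
  moreover have "\<Phi> k (Suc j) = (if k = j then zone else zzero)" if "k < r - 1" for k
    using that assms(2) by (simp add: Phi_upper)
  ultimately have "(\<Sum>k<r - 1. zmul s (vtw q (-1) g k) (\<Phi> k (Suc j)) n \<alpha>) = vtw q (-1) g j n \<alpha>"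
    using assms(2) sum_zmul_unit_right[of j "r - 1" s "vtw q (-1) g"] by simp
  then show ?thesis
    using fun_cong[OF fun_cong[OF fun_cong[OF fixed, of "Suc j"], of n], of \<alpha>] assms(2)
    by (simp add: vecmat_Phi vtw_def ztw_def)
qed

lemma V_eq_zero_if_last_zero:
  assumes g: "g \<in> V" and last: "g (r - 1) = zzero"
  shows "g = (\<lambda>j. zzero)"
proof -
  have twisted_last: "vtw q (-1) g (r - 1) = zzero" using last by (simp add: vtw_def)
  have "g j n \<alpha> = 0" if "j < r" for j n \<alpha>
    using that
  proof (induction j arbitrary: n \<alpha>)
    case 0
    show ?case using V_row_0[OF g] twisted_last by (simp add: zzero_def tzero_def)
  next
    case (Suc j)
    then show ?case using V_row_Suc[OF g Suc.prems] twisted_last by (simp add: ttw_def zzero_def tzero_def)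
  qed
  moreover have "g j n \<alpha> = 0" if "r \<le> j" for j n \<alpha>
    using g that by (simp add: Vphi_def rowvecs_def zzero_def tzero_def)
  ultimately have "g j n \<alpha> = 0" for j n \<alpha> using not_less by blast
  then show ?thesis by (simp add: fun_eq_iff zzero_def tzero_def)
qed

lemma V_last_entry_not_polynomial:
  assumes g: "g \<in> V" and top: "g (r - 1) N \<noteq> tzero"
  shows "\<exists>n>N. g (r - 1) n \<noteq> tzero"
proof (rule ccontr)
  assume "\<not> (\<exists>n>N. g (r - 1) n \<noteq> tzero)"
  then have above: "g (r - 1) (Suc N) = tzero" by simp
  let ?G = "vtw q (-1) g (r - 1)"
  have G_N: "?G N = ttw q (-1) (g (r - 1) N)" and G_Suc: "?G (Suc N) = tzero"
    using above by (simp_all add: vtw_def ztw_def)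
  have "supported s (g (r - 1) N)"
    using g zsupported_rowvec[of g r "Zser q s av" s "r - 1"] by (simp add: Vphi_def zsupported_def)
  then have "supported s (?G N)" unfolding G_N by (intro supported_ttw) simp_all
  have "?G N \<noteq> tzero" unfolding G_N using top by simp
  have "g j (Suc N) \<noteq> tzero" if "j < r" for j
    using that
  proof (induction j)
    case 0
    have "g 0 (Suc N) = tmul s (?G N) Ar_inv"
    proof
      fix \<alpha>
      have "g 0 (Suc N) \<alpha> = zmul s ?G (\<Phi> (r - 1) 0) (Suc N) \<alpha>" by (rule V_row_0[OF g])
      also have "\<dots> = tmul s (?G N) Ar_inv \<alpha>"
        by (simp only: zmul_Phi_last_0_Suc G_Suc tmul_tzero_left) (simp add: tzero_def)
      finally show "g 0 (Suc N) \<alpha> = tmul s (?G N) Ar_inv \<alpha>" .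
    qed
    then show ?case using tmul_Ar_inv_neq_tzero \<open>supported s (?G N)\<close> \<open>?G N \<noteq> tzero\<close> by simp
  next
    case (Suc j)
    have "g (Suc j) (Suc N) = ttw q (-1) (g j (Suc N))"
    proof
      fix \<alpha>
      have "zmul s ?G (\<Phi> (r - 1) (Suc j)) (Suc N) \<alpha> = 0"
        by (simp only: zmul_Phi_last_const[OF zero_less_Suc Suc.prems] G_Suc tmul_tzero_left)
          (simp add: tzero_def)
      then show "g (Suc j) (Suc N) \<alpha> = ttw q (-1) (g j (Suc N)) \<alpha>"
        using V_row_Suc[OF g Suc.prems, of "Suc N" \<alpha>] by simp
    qed
    then show ?case using Suc by simp
  qed
  then show False using r_pos above by simp
qed

lemma zero_in_V: "(\<lambda>j. zzero) \<in> V"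
proof -
  have "vtw q (-1) (\<lambda>j. zzero) = (\<lambda>j. zzero :: 'c zser)" by (simp add: vtw_def)
  moreover have "vecmat s r (\<lambda>j. zzero) \<Phi> = (\<lambda>j. zzero)"
    by (simp add: vecmat_def fun_eq_iff zzero_def tzero_def)
  ultimately show ?thesis by (simp add: Vphi_def rowvecs_def zzero_in_Zser)
qed

theorem V_inter_Tpolyz: "V \<inter> rowvecs r (Tpolyz s av) = {\<lambda>j. zzero}"
proof
  show "{\<lambda>j. zzero} \<subseteq> V \<inter> rowvecs r (Tpolyz s av)"
    using zero_in_V by (simp add: rowvecs_def Tpolyz_def zzero_def tzero_in_Tate)
  show "V \<inter> rowvecs r (Tpolyz s av) \<subseteq> {\<lambda>j. zzero}"
  proof
    fix g assume "g \<in> V \<inter> rowvecs r (Tpolyz s av)"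
    then have g: "g \<in> V" and fin: "finite {n. g (r - 1) n \<noteq> tzero}"
      using r_pos by (auto simp: rowvecs_def Tpolyz_def)
    have "g (r - 1) = zzero"
    proof (cases "{n. g (r - 1) n \<noteq> tzero} = {}")
      case True
      then show ?thesis unfolding zzero_def by (intro ext) simp
    next
      case False
      let ?N = "Max {n. g (r - 1) n \<noteq> tzero}"
      have "g (r - 1) ?N \<noteq> tzero" using Max_in[OF fin False] by simp
      then obtain n where "?N < n" and "g (r - 1) n \<noteq> tzero"
        using V_last_entry_not_polynomial[OF g] by blast
      then show ?thesis using Max_ge[OF fin, of n] by simp
    qed
    then show "g \<in> {\<lambda>j. zzero}" using V_eq_zero_if_last_zero[OF g] by simp
  qed
qed

end

locale rigid_analytic_trivialization = drinfeld_module q av \<theta> s r A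
  for q and av :: "'c::field \<Rightarrow> real" and \<theta> s r A +
  fixes \<Psi> \<Psi>' :: "nat \<Rightarrow> nat \<Rightarrow> 'c zser"
  assumes Psi: "\<Psi> \<in> mats r (Zser q s av)"
    and Psi_inv: "\<Psi>' \<in> mats r (Zser q s av)"
    and Psi_Psi_inv: "matmul s r \<Psi> \<Psi>' = idmat r"
    and Psi_inv_Psi: "matmul s r \<Psi>' \<Psi> = idmat r"
    and Psi_twist: "mtw q (-1) \<Psi> = matmul s r \<Phi> \<Psi>"
begin

lemma Psi_inv_twist: "matmul s r (mtw q (-1) \<Psi>') \<Phi> = \<Psi>'"
proof -
  define X where "X = matmul s r (mtw q (-1) \<Psi>') \<Phi>"
  have "X = matmul s r X (idmat r)"
  proof (rule matmul_idmat_right[symmetric])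
    show "zsupported s (X i j)" if "i < r" "j < r" for i j
      unfolding X_def by (rule zsupported_matmul[OF zsupported_Phi])
    show "X i j = zzero" if "r \<le> i \<or> r \<le> j" for i j
      using that by (auto simp: X_def matmul_def)
  qed
  also have "\<dots> = matmul s r (matmul s r X \<Psi>) \<Psi>'" by (simp add: matmul_assoc Psi_Psi_inv)
  also have "matmul s r X \<Psi> = mtw q (-1) (matmul s r \<Psi>' \<Psi>)"
    by (simp add: X_def matmul_assoc mtw_matmul flip: Psi_twist)
  also have "\<dots> = idmat r" by (simp add: Psi_inv_Psi mtw_idmat)
  also have "matmul s r (idmat r) \<Psi>' = \<Psi>'"
    using Psi_inv by (intro matmul_idmat_left) (auto simp: mats_def)
  finally show ?thesis by (simp add: X_def)
qed

lemma V_subset_row_span: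
  assumes "g \<in> V"
  shows "\<exists>h\<in>rowvecs r (Fqtz q s). g = vecmat s r h \<Psi>'"
proof
  have g: "g \<in> rowvecs r (Zser q s av)" and fixed: "vecmat s r (vtw q (-1) g) \<Phi> = g"
    using assms by (simp_all add: Vphi_def)
  define h where "h = vecmat s r g \<Psi>"
  have h: "h \<in> rowvecs r (Zser q s av)" unfolding h_def using g Psi by (rule vecmat_in_rowvecs_Zser)
  have "vtw q (-1) h = h"
    unfolding h_def by (simp add: vtw_vecmat Psi_twist fixed flip: vecmat_assoc)
  then have "ttw q (-1) (h j n) \<alpha> = h j n \<alpha>" for j n \<alpha>
    by (simp add: vtw_def ztw_def fun_eq_iff)
  then have "h j n \<alpha> ^ q = h j n \<alpha>" for j n \<alpha>
    using twc_minus_one_fixed_iff by (simp add: ttw_def)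
  then show "h \<in> rowvecs r (Fqtz q s)"
    using h by (auto simp: rowvecs_def intro: Zser_Fq_coeffs_in_Fqtz)
  have "vecmat s r h \<Psi>' = vecmat s r g (idmat r)" by (simp add: h_def vecmat_assoc Psi_Psi_inv)
  also have "\<dots> = g"
    using g by (intro vecmat_idmat zsupported_rowvec) (auto simp: rowvecs_def)
  finally show "g = vecmat s r h \<Psi>'" ..
qed

lemma row_span_subset_V:
  assumes h: "h \<in> rowvecs r (Fqtz q s)"
  shows "vecmat s r h \<Psi>' \<in> V"
proof -
  have "h \<in> rowvecs r (Zser q s av)" using h rowvecs_mono[OF Fqtz_subset_Zser] by blast
  then have "vecmat s r h \<Psi>' \<in> rowvecs r (Zser q s av)" using Psi_inv by (rule vecmat_in_rowvecs_Zser)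
  moreover have "vtw q (-1) h = h"
  proof
    fix j show "vtw q (-1) h j = h j"
      using h ztw_Fqtz[of "h j" s] by (cases "j < r") (simp_all add: vtw_def rowvecs_def)
  qed
  then have "vecmat s r (vtw q (-1) (vecmat s r h \<Psi>')) \<Phi> = vecmat s r h \<Psi>'"
    by (simp add: vtw_vecmat vecmat_assoc Psi_inv_twist)
  ultimately show ?thesis by (simp add: Vphi_def)
qed

theorem V_eq_row_span: "V = {vecmat s r h \<Psi>' | h. h \<in> rowvecs r (Fqtz q s)}"
  using V_subset_row_span row_span_subset_V by blast

lemma vecmat_vecmat_Psi_inv_Psi:
  assumes "c \<in> rowvecs r (Fqtz q s)"
  shows "vecmat s r (vecmat s r c \<Psi>') \<Psi> = c"
proof -
  have "vecmat s r (vecmat s r c \<Psi>') \<Psi> = vecmat s r c (idmat r)" by (simp add: vecmat_assoc Psi_inv_Psi)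
  also have "\<dots> = c"
    using assms Fqtz_subset_Zser by (intro vecmat_idmat zsupported_rowvec) (auto simp: rowvecs_def)
  finally show ?thesis .
qed

theorem V_basis:
  "\<exists>b. (\<forall>i<r. b i \<in> V) \<and> (\<forall>g\<in>V. \<exists>!c. c \<in> rowvecs r (Fqtz q s) \<and> g = lincomb s r c b)"
proof (intro exI[of _ \<Psi>'] conjI allI impI ballI)
  fix i assume "i < r"
  let ?e = "\<lambda>j. if j = i then (zone :: 'c zser) else zzero"
  have "?e \<in> rowvecs r (Fqtz q s)" using \<open>i < r\<close> zone_in_Fqtz zzero_in_Fqtz by (auto simp: rowvecs_def)
  moreover have "vecmat s r ?e \<Psi>' = \<Psi>' i"
    using \<open>i < r\<close> Psi_inv by (intro vecmat_unit_row) (auto simp: mats_def)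
  ultimately show "\<Psi>' i \<in> V" using row_span_subset_V by metis
next
  fix g assume "g \<in> V"
  then obtain h where h: "h \<in> rowvecs r (Fqtz q s)" "g = vecmat s r h \<Psi>'"
    using V_subset_row_span by blast
  show "\<exists>!c. c \<in> rowvecs r (Fqtz q s) \<and> g = lincomb s r c \<Psi>'"
  proof (rule ex1I[of _ h])
    show "h \<in> rowvecs r (Fqtz q s) \<and> g = lincomb s r h \<Psi>'" using h by (simp add: lincomb_eq_vecmat)
    fix c assume c: "c \<in> rowvecs r (Fqtz q s) \<and> g = lincomb s r c \<Psi>'"
    then have "vecmat s r (vecmat s r c \<Psi>') \<Psi> = vecmat s r (vecmat s r h \<Psi>') \<Psi>"
      using h by (simp add: lincomb_eq_vecmat)
    then show "c = h" using c h(1) by (simp add: vecmat_vecmat_Psi_inv_Psi)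
  qed
qed

end

theorem proposition4p14:
  fixes q s r :: nat and av :: "'c::field \<Rightarrow> real" and \<theta> :: 'c
    and A :: "nat \<Rightarrow> (nat \<Rightarrow> nat) \<Rightarrow> 'c"
    and \<Psi> \<Psi>' :: "nat \<Rightarrow> nat \<Rightarrow> 'c zser"
  assumes Cinf: "is_Cinf q av \<theta>"
    and r_pos: "r \<ge> 1"
    and A_tate: "\<And>i. 1 \<le> i \<Longrightarrow> i \<le> r \<Longrightarrow> A i \<in> Tate s av"
    and A_unit: "tunit s av (A r)"
    and Psi: "\<Psi> \<in> mats r (Zser q s av)"
    and Psi': "\<Psi>' \<in> mats r (Zser q s av)"
    and inv1: "matmul s r \<Psi> \<Psi>' = idmat r"
    and inv2: "matmul s r \<Psi>' \<Psi> = idmat r"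
    and func_eq: "mtw q (-1) \<Psi> = matmul s r (PhiMat q s av \<theta> r A) \<Psi>"
  shows "Vphi q s av \<theta> r A = {vecmat s r h \<Psi>' | h. h \<in> rowvecs r (Fqtz q s)}
     \<and> (\<exists>b. (\<forall>i<r. b i \<in> Vphi q s av \<theta> r A) \<and>
            (\<forall>g\<in>Vphi q s av \<theta> r A. \<exists>!c. c \<in> rowvecs r (Fqtz q s) \<and> g = lincomb s r c b))
     \<and> Vphi q s av \<theta> r A \<inter> rowvecs r (Tpolyz s av) = {\<lambda>j. zzero}"
proof -
  interpret rigid_analytic_trivialization q av \<theta> s r A \<Psi> \<Psi>'
    using is_Cinf_valued_frobenius_field[OF Cinf] r_pos A_unit Psi Psi' inv1 inv2 func_eq
    by (simp add: rigid_analytic_trivialization_def rigid_analytic_trivialization_axioms_def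
        drinfeld_module_def drinfeld_module_axioms_def)
  show ?thesis using V_eq_row_span V_basis V_inter_Tpolyz by blast
qed

end
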